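(* Let $n\ge1$, $\varphi\in L^2([0,1])$, $\Phi(x)=\int_0^x\varphi(t)\,dt$, and $f\colon[0,1]^n\to\mathbb{R}$, $f(\mathbf{x})=\prod_{i=1}^n\varphi(x_i)$. Then for every $k\in\{1,\ldots,n\}$, $$I(f,k)=\begin{cases}\Phi(1)^n\int_0^1 D_z h(z;k+1,n-k+2)\big|_{z=\Phi(y)/\Phi(1)}\,dy, & \text{if } \Phi(1)\ne0,\\[1ex] (-1)^{n-k+1}(n+1)\,\dfrac{\Gamma(n+3)}{\Gamma(k+1)\,\Gamma(n-k+2)}\int_0^1\Phi(y)^n\,dy, & \text{if } \Phi(1)=0,\end{cases}$$ where $h(z;a,b)=z^{a-1}(1-z)^{b-1}/B(a,b)$ is the beta density with parameters $a,b$ and $D_z$ denotes derivative with respect to $z$.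
   Context: For $\mathbf{x}\in[0,1]^n$, $x_{(1)}\le\cdots\le x_{(n)}$ are its coordinates in ascending order, with $x_{(0)}=0$, $x_{(n+1)}=1$. The influence index of a square integrable $f$ on $[0,1]^n$ is $I(f,k)=-(n+1)(n+2)\int_{[0,1]^n}f(\mathbf{x})\,\big(x_{(k+1)}-2x_{(k)}+x_{(k-1)}\big)\,d\mathbf{x}$. $B$ is the beta function and $\Gamma$ the gamma function. *)

theory Defs
  imports "HOL-Analysis.Analysis"
begin

text \<open>Points of [0,1]^n are functions x :: nat => real, with coordinates x 0, ..., x (n-1).\<close>

definition order_stat :: "nat \<Rightarrow> (nat \<Rightarrow> real) \<Rightarrow> nat \<Rightarrow> real" where
  "order_stat n x k =
     (if k = 0 then 0 else if k \<le> n then sort (map x [0..<n]) ! (k - 1) else 1)"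

definition unit_cube :: "nat \<Rightarrow> (nat \<Rightarrow> real) measure" where
  "unit_cube n = PiM {..<n} (\<lambda>_. restrict_space lborel {0..1::real})"

definition influence_index :: "nat \<Rightarrow> ((nat \<Rightarrow> real) \<Rightarrow> real) \<Rightarrow> nat \<Rightarrow> real" where
  "influence_index n f k =
     - (real n + 1) * (real n + 2) *
       (\<integral>x. f x * (order_stat n x (k + 1) - 2 * order_stat n x k + order_stat n x (k - 1))
          \<partial>unit_cube n)"

text \<open>Beta density h(z;a,b) = z^(a-1) (1-z)^(b-1) / B(a,b), for positive integer parameters
  (the only case needed); as a polynomial formula it is defined for all real z.\<close>
definition beta_density :: "nat \<Rightarrow> nat \<Rightarrow> real \<Rightarrow> real" where
  "beta_density a b z = z ^ (a - 1) * (1 - z) ^ (b - 1) / Beta (real a) (real b)"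

end

theory Submission
  imports Defs "HOL-Probability.Probability_Measure"
begin

text \<open>
  The order statistic \<open>x_(j)\<close> is the measure of the set of levels \<open>t \<in> [0,1]\<close> below which fewer
  than \<open>j\<close> coordinates of \<open>x\<close> lie. Fubini therefore turns \<open>\<integral> f(x) x_(j) dx\<close> into
  \<open>\<integral>\<^sub>0\<^sup>1 P_j(t) dt\<close>, where \<open>P_j(t)\<close> is the integral of \<open>f\<close> over the points with fewer than \<open>j\<close>
  coordinates \<open>\<le> t\<close>. Splitting these points according to which coordinates are \<open>\<le> t\<close> and
  integrating coordinatewise gives \<open>P_j(t) = \<Sum>\<^sub>m\<^sub><\<^sub>j C(n,m) \<Phi>(t)^m (\<Phi>(1) - \<Phi>(t))^(n-m)\<close>. The second
  difference in \<open>j\<close> leaves two neighbouring binomial terms. After rescaling by \<open>\<Phi>(1)^n\<close> they are,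
  up to the factor \<open>-(n+1)(n+2)\<close>, the derivative of the beta density at \<open>\<Phi>(t)/\<Phi>(1)\<close>; when
  \<open>\<Phi>(1) = 0\<close> they combine into a multiple of \<open>\<Phi>(t)^n\<close>.
\<close>

section \<open>Order statistics\<close>

lemma sorted_card_nth_le_less_iff:
  fixes ys :: "'a::linorder list"
  assumes "sorted ys" "1 \<le> j" "j \<le> length ys"
  shows "card {i. i < length ys \<and> ys ! i \<le> t} < j \<longleftrightarrow> t < ys ! (j - 1)"
proof (cases "t < ys ! (j - 1)")
  case True
  have "{i. i < length ys \<and> ys ! i \<le> t} \<subseteq> {..<j - 1}"
  proof safe
    fix i assume "i < length ys" "ys ! i \<le> t"
    then show "i < j - 1"
      using True sorted_nth_mono[OF assms(1), of "j - 1" i] by (meson leI less_le_trans not_le)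
  qed
  then have "card {i. i < length ys \<and> ys ! i \<le> t} \<le> card {..<j - 1}"
    by (intro card_mono) auto
  with True assms show ?thesis by simp
next
  case False
  have "{..<j} \<subseteq> {i. i < length ys \<and> ys ! i \<le> t}"
  proof safe
    fix i assume "i < j"
    then have "ys ! i \<le> ys ! (j - 1)"
      using assms by (intro sorted_nth_mono) auto
    with \<open>i < j\<close> False assms show "i < length ys" "ys ! i \<le> t" by auto
  qed
  then have "card {..<j} \<le> card {i. i < length ys \<and> ys ! i \<le> t}"
    by (intro card_mono) auto
  with False show ?thesis by simp
qed

lemma card_le_eq_card_le_sort:
  "card {i. i < n \<and> x i \<le> t} = card {i. i < n \<and> sort (map x [0..<n]) ! i \<le> t}"
proof -
  have "card {i. i < n \<and> x i \<le> t} = length (filter (\<lambda>v. v \<le> t) (map x [0..<n]))"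
    unfolding length_filter_conv_card by (rule arg_cong[where f = card]) auto
  also have "\<dots> = length (filter (\<lambda>v. v \<le> t) (sort (map x [0..<n])))"
    by (metis mset_filter mset_sort size_mset)
  also have "\<dots> = card {i. i < n \<and> sort (map x [0..<n]) ! i \<le> t}"
    by (simp add: length_filter_conv_card)
  finally show ?thesis .
qed

lemma less_order_stat_iff:
  assumes "1 \<le> j" "j \<le> n"
  shows "t < order_stat n x j \<longleftrightarrow> card {i. i < n \<and> x i \<le> t} < j"
proof -
  have "t < order_stat n x j \<longleftrightarrow> t < sort (map x [0..<n]) ! (j - 1)"
    using assms by (simp add: order_stat_def)
  also have "\<dots> \<longleftrightarrow> card {i. i < n \<and> sort (map x [0..<n]) ! i \<le> t} < j"
    using sorted_card_nth_le_less_iff[of "sort (map x [0..<n])" j t] assms by simp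
  also have "\<dots> \<longleftrightarrow> card {i. i < n \<and> x i \<le> t} < j"
    by (simp only: card_le_eq_card_le_sort[of n x t])
  finally show ?thesis .
qed

lemma order_stat_in_unit_interval:
  assumes "\<And>i. i < n \<Longrightarrow> x i \<in> {0..1}"
  shows "order_stat n x j \<in> {0..1}"
proof -
  have "sort (map x [0..<n]) ! (j - 1) \<in> set (map x [0..<n])" if "1 \<le> j" "j \<le> n"
  proof -
    have "j - 1 < length (sort (map x [0..<n]))" using that by simp
    then have "sort (map x [0..<n]) ! (j - 1) \<in> set (sort (map x [0..<n]))" by (rule nth_mem)
    then show ?thesis by simp
  qed
  then show ?thesis using assms by (auto simp: order_stat_def)
qed

section \<open>Counting coordinates below a level\<close>

lemma sum_subsets_card_less:
  fixes g :: "nat \<Rightarrow> 'a::comm_semiring_1"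
  assumes "finite A"
  shows "(\<Sum>S | S \<subseteq> A \<and> card S < j. g (card S)) = (\<Sum>m<j. of_nat (card A choose m) * g m)"
proof -
  have "(\<Sum>S | S \<subseteq> A \<and> card S < j. g (card S))
      = (\<Sum>m<j. \<Sum>S | S \<in> {S. S \<subseteq> A \<and> card S < j} \<and> card S = m. g (card S))"
    by (rule sum.group[symmetric]) (use assms in \<open>auto intro: finite_subset[of _ "Pow A"]\<close>)
  also have "\<dots> = (\<Sum>m<j. \<Sum>S | S \<subseteq> A \<and> card S = m. g m)"
    by (intro sum.cong) auto
  also have "\<dots> = (\<Sum>m<j. of_nat (card A choose m) * g m)"
    using n_subsets[OF assms] by simp
  finally show ?thesis .
qed

lemma of_bool_card_less_eq_sum_subsets:
  fixes n :: nat
  shows "(of_bool (card {i. i < n \<and> P i} < j) :: 'a::comm_semiring_1) =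
     (\<Sum>S | S \<subseteq> {..<n} \<and> card S < j. \<Prod>i<n. of_bool (i \<in> S \<longleftrightarrow> P i))"
proof -
  have "(\<Prod>i<n. of_bool (i \<in> S \<longleftrightarrow> P i) :: 'a) = of_bool (S = {i. i < n \<and> P i})"
    if S: "S \<subseteq> {..<n}" for S
  proof (cases "S = {i. i < n \<and> P i}")
    case False
    then obtain i where "i < n" "(i \<in> S) \<noteq> P i" using S by blast
    then have "(\<Prod>i<n. of_bool (i \<in> S \<longleftrightarrow> P i) :: 'a) = 0"
      by (intro prod_zero) auto
    then show ?thesis using False by simp
  qed (auto intro: prod.neutral)
  then have "(\<Sum>S | S \<subseteq> {..<n} \<and> card S < j. \<Prod>i<n. of_bool (i \<in> S \<longleftrightarrow> P i) :: 'a)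
      = (\<Sum>S | S \<subseteq> {..<n} \<and> card S < j. if S = {i. i < n \<and> P i} then 1 else 0)"
    by (intro sum.cong) auto
  also have "\<dots> = of_bool (card {i. i < n \<and> P i} < j)"
    by (subst sum.delta) (auto intro: finite_subset[of _ "Pow {..<n}"])
  finally show ?thesis ..
qed

section \<open>Binomial terms and the beta density\<close>

definition binomial_term :: "nat \<Rightarrow> nat \<Rightarrow> real \<Rightarrow> real \<Rightarrow> real" where
  "binomial_term n m a b = real (n choose m) * a ^ m * b ^ (n - m)"

lemma sum_lessThan_second_difference:
  fixes g :: "nat \<Rightarrow> 'a::comm_ring_1"
  assumes "1 \<le> k"
  shows "(\<Sum>m<k+1. g m) - 2 * (\<Sum>m<k. g m) + (\<Sum>m<k-1. g m) = g k - g (k - 1)"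
proof -
  obtain l where "k = Suc l" using assms by (cases k) auto
  then show ?thesis by (simp add: algebra_simps)
qed

lemma binomial_term_homogeneous:
  assumes "c \<noteq> 0" "m \<le> n"
  shows "c ^ n * binomial_term n m (a / c) (1 - a / c) = binomial_term n m a (c - a)"
proof -
  have "c ^ n = c ^ m * c ^ (n - m)" using assms(2) by (simp flip: power_add)
  moreover have "1 - a / c = (c - a) / c" using assms(1) by (simp add: field_simps)
  ultimately show ?thesis using assms(1) by (simp add: binomial_term_def power_divide field_simps)
qed

lemma binomial_term_opposite:
  assumes "m \<le> n"
  shows "binomial_term n m a (- a) = (- 1) ^ (n - m) * real (n choose m) * a ^ n"
proof -
  have "a ^ m * a ^ (n - m) = a ^ n" using assms by (simp flip: power_add)
  then show ?thesis by (simp add: binomial_term_def power_minus[of a] mult_ac)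
qed

lemma binomial_term_diff_opposite:
  assumes "1 \<le> k" "k \<le> n"
  shows "binomial_term n k a (- a) - binomial_term n (k - 1) a (- a)
    = (- 1) ^ (n - k) * real (Suc n choose k) * a ^ n"
proof -
  obtain l where k: "k = Suc l" using assms by (cases k) auto
  have "n - l = Suc (n - k)" using assms k by simp
  then show ?thesis
    using assms by (simp add: binomial_term_opposite k algebra_simps)
qed

lemma Gamma_real_Suc: "Gamma (real (Suc j)) = fact j"
  using Gamma_fact[of j] by (simp add: add.commute)

lemma Beta_Suc_Suc: "Beta (real (Suc a)) (real (Suc b)) = fact a * fact b / fact (Suc (a + b))"
proof -
  have "real (Suc a) + real (Suc b) = real (Suc (Suc (a + b)))" by simp
  then show ?thesis by (simp only: Beta_def Gamma_real_Suc)
qed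

lemma deriv_beta_density:
  "deriv (beta_density (Suc a) (Suc b)) z =
     (real a * z ^ (a - 1) * (1 - z) ^ b - real b * z ^ a * (1 - z) ^ (b - 1)) / Beta (Suc a) (Suc b)"
proof -
  have "((\<lambda>z. z ^ a * (1 - z) ^ b / Beta (Suc a) (Suc b)) has_real_derivative
      (real a * z ^ (a - 1) * (1 - z) ^ b - real b * z ^ a * (1 - z) ^ (b - 1)) / Beta (Suc a) (Suc b)) (at z)"
    by (intro DERIV_cdivide) (auto intro!: derivative_eq_intros simp: algebra_simps)
  then show ?thesis unfolding beta_density_def by (simp add: DERIV_imp_deriv)
qed

lemma divide_Beta_Suc_Suc:
  assumes "1 \<le> k" "n = k + q"
  shows "real k / Beta (real (Suc k)) (real (Suc (Suc q))) =
      (real n + 1) * (real n + 2) * real (n choose (k - 1))"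
    and "real (Suc q) / Beta (real (Suc k)) (real (Suc (Suc q))) =
      (real n + 1) * (real n + 2) * real (n choose k)"
proof -
  have fn: "fact (Suc (Suc n)) = (real n + 1) * (real n + 2) * fact n"
    by (simp add: algebra_simps)
  have B: "Beta (real (Suc k)) (real (Suc (Suc q))) = fact k * fact (Suc q) / fact (Suc (Suc n))"
    using Beta_Suc_Suc[of k "Suc q"] assms(2) by simp
  have fk: "fact k = real k * (fact (k - 1) :: real)"
    using assms by (cases k) auto
  have fq: "fact (Suc q) = real (Suc q) * (fact q :: real)"
    by simp
  have choose_pred: "real (n choose (k - 1)) = fact n / (fact (k - 1) * fact (Suc q))"
  proof -
    have "k - 1 \<le> n" "n - (k - 1) = Suc q" using assms by simp_all
    then show ?thesis using binomial_fact[of "k - 1" n] by simp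
  qed
  have choose: "real (n choose k) = fact n / (fact k * fact q)"
    using binomial_fact[of k n] assms(2) by simp
  have "real k / Beta (real (Suc k)) (real (Suc (Suc q))) =
      fact (Suc (Suc n)) / (fact (k - 1) * fact (Suc q))"
    unfolding B fk using assms by (simp add: mult.assoc)
  then show "real k / Beta (real (Suc k)) (real (Suc (Suc q))) =
      (real n + 1) * (real n + 2) * real (n choose (k - 1))"
    unfolding choose_pred fn by simp
  have "real (Suc q) / Beta (real (Suc k)) (real (Suc (Suc q))) =
      fact (Suc (Suc n)) / (fact k * fact q)"
    unfolding B fq by (simp add: mult.left_commute del: fact_Suc of_nat_Suc)
  then show "real (Suc q) / Beta (real (Suc k)) (real (Suc (Suc q))) =
      (real n + 1) * (real n + 2) * real (n choose k)"
    unfolding choose fn by simp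
qed

lemma deriv_beta_density_eq_binomial_terms:
  assumes "1 \<le> k" "k \<le> n"
  shows "deriv (beta_density (k + 1) (n - k + 2)) z =
    - (real n + 1) * (real n + 2) * (binomial_term n k z (1 - z) - binomial_term n (k - 1) z (1 - z))"
proof -
  define q where "q = n - k"
  have n: "n = k + q" and q: "n - k + 2 = Suc (Suc q)" "n - (k - 1) = Suc q"
    using assms by (simp_all add: q_def)
  define B where "B = Beta (real (Suc k)) (real (Suc (Suc q)))"
  note c = divide_Beta_Suc_Suc[OF assms(1) n, folded B_def]
  have "deriv (beta_density (k + 1) (n - k + 2)) z =
      (real k * z ^ (k - 1) * (1 - z) ^ Suc q - real (Suc q) * z ^ k * (1 - z) ^ q) / B"
    using deriv_beta_density[of k "Suc q" z] unfolding q(1) B_def by simp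
  also have "\<dots> = (real k / B) * (z ^ (k - 1) * (1 - z) ^ Suc q) - (real (Suc q) / B) * (z ^ k * (1 - z) ^ q)"
    by (simp add: diff_divide_distrib)
  also have "\<dots> = - (real n + 1) * (real n + 2) *
      (binomial_term n k z (1 - z) - binomial_term n (k - 1) z (1 - z))"
  proof -
    have b1: "binomial_term n (k - 1) z (1 - z) = real (n choose (k - 1)) * (z ^ (k - 1) * (1 - z) ^ Suc q)"
      unfolding binomial_term_def q(2) by (simp add: mult.assoc)
    have b2: "binomial_term n k z (1 - z) = real (n choose k) * (z ^ k * (1 - z) ^ q)"
      by (simp add: binomial_term_def q_def mult.assoc)
    show ?thesis unfolding b1 b2 c by (simp add: algebra_simps)
  qed
  finally show ?thesis .
qed

lemma scaled_deriv_beta_density: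
  assumes "1 \<le> k" "k \<le> n" "c \<noteq> 0"
  shows "c ^ n * deriv (beta_density (k + 1) (n - k + 2)) (a / c) =
    - (real n + 1) * (real n + 2) * (binomial_term n k a (c - a) - binomial_term n (k - 1) a (c - a))"
proof -
  have "c ^ n * deriv (beta_density (k + 1) (n - k + 2)) (a / c) =
      - (real n + 1) * (real n + 2) * (c ^ n * binomial_term n k (a / c) (1 - a / c)
        - c ^ n * binomial_term n (k - 1) (a / c) (1 - a / c))"
    unfolding deriv_beta_density_eq_binomial_terms[OF assms(1,2)] by (simp only: right_diff_distrib mult_ac)
  then show ?thesis using assms by (simp add: binomial_term_homogeneous)
qed

lemma Gamma_quotient_eq_binomial:
  assumes "k \<le> n"
  shows "Gamma (real n + 3) / (Gamma (real k + 1) * Gamma (real n - real k + 2))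
    = (real n + 2) * real (Suc n choose k)"
proof -
  have "Gamma (real n + 3) = fact (Suc (Suc n))"
    using Gamma_real_Suc[of "Suc (Suc n)"] by (simp add: add.commute numeral_3_eq_3)
  moreover have "Gamma (real k + 1) = fact k"
    using Gamma_real_Suc[of k] by (simp add: add.commute)
  moreover have "Gamma (real n - real k + 2) = fact (Suc (n - k))"
  proof -
    have "real n - real k + 2 = real (Suc (Suc (n - k)))" using assms by simp
    then show ?thesis by (simp only: Gamma_real_Suc)
  qed
  moreover have "real (Suc n choose k) = fact (Suc n) / (fact k * fact (Suc (n - k)))"
    using binomial_fact[of k "Suc n"] assms by (simp add: Suc_diff_le)
  moreover have "(fact (Suc (Suc n)) :: real) = (real n + 2) * fact (Suc n)"
    by (simp only: fact_Suc[of "Suc n"] of_nat_Suc) (simp add: add.commute)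
  ultimately show ?thesis by (simp del: fact_Suc)
qed

lemma scaled_binomial_term_diff_opposite:
  assumes "1 \<le> k" "k \<le> n"
  shows "- (real n + 1) * (real n + 2) * (binomial_term n k a (- a) - binomial_term n (k - 1) a (- a)) =
    (- 1) ^ (n - k + 1) * (real n + 1) *
      (Gamma (real n + 3) / (Gamma (real k + 1) * Gamma (real n - real k + 2))) * a ^ n"
  unfolding binomial_term_diff_opposite[OF assms] Gamma_quotient_eq_binomial[OF assms(2)]
  by (simp add: algebra_simps)

text \<open>The \<open>measurable\<close> method cannot handle \<open>of_bool\<close> of an equivalence with a constant side.\<close>

lemma borel_measurable_of_bool_iff_le:
  fixes f g :: "'a \<Rightarrow> real"
  assumes [measurable]: "f \<in> borel_measurable M" "g \<in> borel_measurable M"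
  shows "(\<lambda>x. of_bool (b \<longleftrightarrow> f x \<le> g x) :: real) \<in> borel_measurable M"
  by (cases b) (simp_all add: of_bool_def)

lemma integral_second_difference:
  fixes f g h :: "'a \<Rightarrow> real"
  assumes "integrable M f" "integrable M g" "integrable M h"
  shows "(\<integral>x. f x - 2 * g x + h x \<partial>M) = integral\<^sup>L M f - 2 * integral\<^sup>L M g + integral\<^sup>L M h"
  using assms by (simp add: Bochner_Integration.integral_add Bochner_Integration.integral_diff)

lemma (in prob_space) integrable_comp_fst:
  fixes f :: "'b \<Rightarrow> 'c::{banach, second_countable_topology}"
  assumes "integrable N f"
  shows "integrable (N \<Otimes>\<^sub>M M) (\<lambda>z. f (fst z))"
proof -
  have "integrable (distr (N \<Otimes>\<^sub>M M) N fst) f"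
    using assms by (simp only: distr_pair_fst)
  then show ?thesis
    by (rule integrable_distr_eq[OF measurable_fst[of N M] borel_measurable_integrable[OF assms], THEN iffD1])
qed

lemma integrable_mult_of_bool:
  fixes f :: "'a \<Rightarrow> real"
  assumes "integrable M f" "Measurable.pred M P"
  shows "integrable M (\<lambda>x. f x * of_bool (P x))"
  by (rule Bochner_Integration.integrable_bound[OF assms(1)]) (use assms in auto)

section \<open>The uniform measure on the unit interval\<close>

text \<open>
  A constant rather than an abbreviation: inside \<open>restrict_space lborel\<close> the \<open>measurable\<close>
  method replaces \<open>lborel\<close> by \<open>borel\<close>, which would bypass the \<open>[measurable]\<close> rule below.
\<close>

definition unit_interval :: "real measure" where
  "unit_interval = restrict_space lborel {0..1}"

lemma space_unit_interval [simp]: "space unit_interval = {0..1}"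
  by (simp add: unit_interval_def space_restrict_space)

lemma unit_cube_eq_PiM: "unit_cube n = PiM {..<n} (\<lambda>_. unit_interval)"
  by (simp add: unit_cube_def unit_interval_def)

interpretation unit_interval: prob_space unit_interval
  by (rule prob_spaceI) (simp add: unit_interval_def emeasure_restrict_space)

interpretation unit_cube: product_prob_space "\<lambda>_::nat. unit_interval"
  by unfold_locales

lemma integral_unit_interval:
  fixes g :: "real \<Rightarrow> 'a::{banach, second_countable_topology}"
  shows "integral\<^sup>L unit_interval g = (LINT t:{0..1}|lborel. g t)"
  unfolding unit_interval_def set_lebesgue_integral_def by (rule integral_restrict_space) simp

lemma integrable_unit_interval_iff:
  fixes g :: "real \<Rightarrow> 'a::{banach, second_countable_topology}"
  shows "integrable unit_interval g \<longleftrightarrow> set_integrable lborel {0..1} g"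
  unfolding unit_interval_def set_integrable_def by (rule integrable_restrict_space) simp

lemma borel_measurable_unit_interval_iff:
  fixes g :: "real \<Rightarrow> 'a::real_normed_vector"
  shows "g \<in> borel_measurable unit_interval \<longleftrightarrow> set_borel_measurable lborel {0..1} g"
  unfolding unit_interval_def set_borel_measurable_def by (rule borel_measurable_restrict_space_iff) simp

lemma id_borel_measurable_unit_interval [measurable]: "(\<lambda>t. t) \<in> borel_measurable unit_interval"
  unfolding unit_interval_def by (rule measurable_restrict_space1) simp

lemma pair_sigma_finite_unit_cube: "pair_sigma_finite (unit_cube n) unit_interval"
  unfolding unit_cube_eq_PiM
  by (rule pair_sigma_finite.intro[OF unit_cube.sigma_finite unit_interval.sigma_finite_measure_axioms]) simp

lemma borel_measurable_of_bool_card_le_less: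
  "(\<lambda>z. of_bool (card {i. i < n \<and> fst z i \<le> snd z} < j) :: real)
    \<in> borel_measurable (unit_cube n \<Otimes>\<^sub>M unit_interval)"
  unfolding of_bool_card_less_eq_sum_subsets unit_cube_eq_PiM
proof (intro borel_measurable_sum borel_measurable_prod borel_measurable_of_bool_iff_le)
  show "(\<lambda>z. fst z i) \<in> borel_measurable (PiM {..<n} (\<lambda>_. unit_interval) \<Otimes>\<^sub>M unit_interval)"
    if "i \<in> {..<n}" for i
    using that by measurable
qed measurable

lemma coordinate_in_unit_interval: "x \<in> space (unit_cube n) \<Longrightarrow> i < n \<Longrightarrow> x i \<in> {0..1}"
  by (simp add: unit_cube_eq_PiM space_PiM PiE_iff)

lemma order_stat_eq_integral_card_less:
  assumes x: "x \<in> space (unit_cube n)" and j: "j \<le> n + 1"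
  shows "order_stat n x j = (\<integral>t. of_bool (card {i. i < n \<and> x i \<le> t} < j) \<partial>unit_interval)"
proof -
  consider "j = 0" | "j = n + 1" | "1 \<le> j" "j \<le> n" using j by linarith
  then show ?thesis
  proof cases
    case 1
    then show ?thesis by (simp add: order_stat_def)
  next
    case 2
    have "card {i. i < n \<and> x i \<le> t} \<le> card {..<n}" for t
      by (rule card_mono) auto
    then have "card {i. i < n \<and> x i \<le> t} < j" for t
      using 2 by (simp add: less_Suc_eq_le)
    moreover have "measure unit_interval {0..1} = 1"
      using unit_interval.prob_space by simp
    ultimately show ?thesis using 2 by (simp add: order_stat_def)
  next
    case 3
    define y where "y = order_stat n x j"
    have y: "y \<in> {0..1}"
      unfolding y_def using coordinate_in_unit_interval[OF x] by (rule order_stat_in_unit_interval)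
    have "(\<integral>t. of_bool (card {i. i < n \<and> x i \<le> t} < j) \<partial>unit_interval)
        = (\<integral>t. (indicator {..<y} t :: real) \<partial>unit_interval)"
      using 3 by (intro Bochner_Integration.integral_cong) (auto simp: less_order_stat_iff y_def)
    also have "\<dots> = (\<integral>t. (indicator {0..<y} t :: real) \<partial>lborel)"
      unfolding integral_unit_interval set_lebesgue_integral_def
      using y by (intro Bochner_Integration.integral_cong) (auto simp: indicator_def)
    also have "\<dots> = y" using y by simp
    finally show ?thesis by (simp add: y_def)
  qed
qed

section \<open>Integrals against a product density\<close>

locale primitive_on_unit_interval =
  fixes \<phi> \<Phi> :: "real \<Rightarrow> real"
  assumes integrable_\<phi>: "integrable unit_interval \<phi>"
    and \<Phi>_eq: "\<And>x. \<Phi> x = (LINT t:{0..x}|lborel. \<phi> t)"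
begin

lemma integral_mult_of_bool_le:
  assumes "t \<le> 1"
  shows "(\<integral>s. \<phi> s * of_bool (b \<longleftrightarrow> s \<le> t) \<partial>unit_interval) = (if b then \<Phi> t else \<Phi> 1 - \<Phi> t)"
proof -
  have le: "(\<integral>s. \<phi> s * of_bool (s \<le> u) \<partial>unit_interval) = \<Phi> u" if "u \<le> 1" for u
    unfolding integral_unit_interval \<Phi>_eq set_lebesgue_integral_def
    using that by (intro Bochner_Integration.integral_cong) (auto simp: indicator_def)
  have "(\<integral>s. \<phi> s * of_bool (\<not> s \<le> t) \<partial>unit_interval)
      = (\<integral>s. \<phi> s * of_bool (s \<le> 1) - \<phi> s * of_bool (s \<le> t) \<partial>unit_interval)"
    by (intro Bochner_Integration.integral_cong) auto
  also have "\<dots> = \<Phi> 1 - \<Phi> t"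
    using integrable_\<phi> assms
    by (subst Bochner_Integration.integral_diff) (auto intro!: integrable_mult_of_bool simp: le)
  finally show ?thesis using le[OF assms] by auto
qed

lemma integral_prod_mult_of_bool_card_less:
  assumes "t \<le> 1"
  shows "(\<integral>x. (\<Prod>i<n. \<phi> (x i)) * of_bool (card {i. i < n \<and> x i \<le> t} < j) \<partial>unit_cube n)
    = (\<Sum>m<j. binomial_term n m (\<Phi> t) (\<Phi> 1 - \<Phi> t))"
proof -
  have subset_integral: "(\<integral>x. (\<Prod>i<n. \<phi> (x i) * of_bool (i \<in> S \<longleftrightarrow> x i \<le> t)) \<partial>unit_cube n)
      = \<Phi> t ^ card S * (\<Phi> 1 - \<Phi> t) ^ (n - card S)" if S: "S \<subseteq> {..<n}" for S
  proof -
    have "(\<integral>x. (\<Prod>i<n. \<phi> (x i) * of_bool (i \<in> S \<longleftrightarrow> x i \<le> t)) \<partial>unit_cube n)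
        = (\<Prod>i<n. if i \<in> S then \<Phi> t else \<Phi> 1 - \<Phi> t)"
      unfolding unit_cube_eq_PiM using integrable_\<phi> assms
      by (subst unit_cube.product_integral_prod)
        (auto intro!: integrable_mult_of_bool simp: integral_mult_of_bool_le)
    also have "\<dots> = \<Phi> t ^ card S * (\<Phi> 1 - \<Phi> t) ^ (n - card S)"
      using S by (simp add: prod.If_cases Int_absorb1 Diff_eq[symmetric] card_Diff_subset finite_subset)
    finally show ?thesis .
  qed
  have "(\<integral>x. (\<Prod>i<n. \<phi> (x i)) * of_bool (card {i. i < n \<and> x i \<le> t} < j) \<partial>unit_cube n)
      = (\<integral>x. (\<Sum>S | S \<subseteq> {..<n} \<and> card S < j. \<Prod>i<n. \<phi> (x i) * of_bool (i \<in> S \<longleftrightarrow> x i \<le> t)) \<partial>unit_cube n)"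
    by (simp add: of_bool_card_less_eq_sum_subsets sum_distrib_left prod.distrib)
  also have "\<dots> = (\<Sum>S | S \<subseteq> {..<n} \<and> card S < j. \<Phi> t ^ card S * (\<Phi> 1 - \<Phi> t) ^ (n - card S))"
    unfolding unit_cube_eq_PiM using integrable_\<phi>
    by (subst Bochner_Integration.integral_sum)
      (auto intro!: unit_cube.product_integrable_prod integrable_mult_of_bool sum.cong
        simp: subset_integral[unfolded unit_cube_eq_PiM])
  also have "\<dots> = (\<Sum>m<j. binomial_term n m (\<Phi> t) (\<Phi> 1 - \<Phi> t))"
    using sum_subsets_card_less[of "{..<n}" "\<lambda>m. \<Phi> t ^ m * (\<Phi> 1 - \<Phi> t) ^ (n - m)" j]
    by (simp add: binomial_term_def mult.assoc)
  finally show ?thesis .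
qed

lemma integrable_prod_density: "integrable (unit_cube n) (\<lambda>x. \<Prod>i<n. \<phi> (x i))"
  unfolding unit_cube_eq_PiM using integrable_\<phi> by (intro unit_cube.product_integrable_prod) auto

lemma integrable_prod_mult_of_bool_card_less:
  "integrable (unit_cube n \<Otimes>\<^sub>M unit_interval)
    (\<lambda>(x, t). (\<Prod>i<n. \<phi> (x i)) * of_bool (card {i. i < n \<and> x i \<le> t} < j))"
  unfolding case_prod_beta'
proof (rule Bochner_Integration.integrable_bound)
  show "integrable (unit_cube n \<Otimes>\<^sub>M unit_interval) (\<lambda>z. \<Prod>i<n. \<phi> (fst z i))"
    using unit_interval.integrable_comp_fst[OF integrable_prod_density] .
  show "(\<lambda>z. (\<Prod>i<n. \<phi> (fst z i)) * of_bool (card {i. i < n \<and> fst z i \<le> snd z} < j))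
      \<in> borel_measurable (unit_cube n \<Otimes>\<^sub>M unit_interval)"
    by (intro borel_measurable_times borel_measurable_of_bool_card_le_less
        measurable_compose[OF measurable_fst borel_measurable_integrable[OF integrable_prod_density]])
qed (auto simp: abs_mult)

lemma integral_prod_mult_order_stat:
  assumes "j \<le> n + 1"
  shows "integrable (unit_cube n) (\<lambda>x. (\<Prod>i<n. \<phi> (x i)) * order_stat n x j)"
    and "integrable unit_interval (\<lambda>t. \<Sum>m<j. binomial_term n m (\<Phi> t) (\<Phi> 1 - \<Phi> t))"
    and "(\<integral>x. (\<Prod>i<n. \<phi> (x i)) * order_stat n x j \<partial>unit_cube n) =
      (\<integral>t. (\<Sum>m<j. binomial_term n m (\<Phi> t) (\<Phi> 1 - \<Phi> t)) \<partial>unit_interval)"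
proof -
  interpret pair_sigma_finite "unit_cube n" unit_interval
    by (rule pair_sigma_finite_unit_cube)
  define G where "G x t = (\<Prod>i<n. \<phi> (x i)) * of_bool (card {i. i < n \<and> x i \<le> t} < j)" for x t
  have G: "integrable (unit_cube n \<Otimes>\<^sub>M unit_interval) (case_prod G)"
    using integrable_prod_mult_of_bool_card_less unfolding G_def .
  have G_t: "(\<integral>t. G x t \<partial>unit_interval) = (\<Prod>i<n. \<phi> (x i)) * order_stat n x j"
    if "x \<in> space (unit_cube n)" for x
    using order_stat_eq_integral_card_less[OF that assms] by (simp add: G_def)
  have G_x: "(\<integral>x. G x t \<partial>unit_cube n) = (\<Sum>m<j. binomial_term n m (\<Phi> t) (\<Phi> 1 - \<Phi> t))"
    if "t \<in> space unit_interval" for t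
    using that by (simp add: G_def integral_prod_mult_of_bool_card_less)
  have "integrable (unit_cube n) (\<lambda>x. \<integral>t. G x t \<partial>unit_interval) \<longleftrightarrow>
      integrable (unit_cube n) (\<lambda>x. (\<Prod>i<n. \<phi> (x i)) * order_stat n x j)"
    by (intro Bochner_Integration.integrable_cong) (simp_all add: G_t)
  with integrable_fst[OF G]
  show "integrable (unit_cube n) (\<lambda>x. (\<Prod>i<n. \<phi> (x i)) * order_stat n x j)" by simp
  have "integrable unit_interval (\<lambda>t. \<integral>x. G x t \<partial>unit_cube n) \<longleftrightarrow>
      integrable unit_interval (\<lambda>t. \<Sum>m<j. binomial_term n m (\<Phi> t) (\<Phi> 1 - \<Phi> t))"
    by (intro Bochner_Integration.integrable_cong) (simp_all add: G_x)
  with integrable_snd[OF G]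
  show "integrable unit_interval (\<lambda>t. \<Sum>m<j. binomial_term n m (\<Phi> t) (\<Phi> 1 - \<Phi> t))" by simp
  have "(\<integral>x. (\<Prod>i<n. \<phi> (x i)) * order_stat n x j \<partial>unit_cube n) =
      (\<integral>x. \<integral>t. G x t \<partial>unit_interval \<partial>unit_cube n)"
    by (intro Bochner_Integration.integral_cong) (simp_all add: G_t)
  also have "\<dots> = (\<integral>t. \<integral>x. G x t \<partial>unit_cube n \<partial>unit_interval)"
    by (rule Fubini_integral[OF G, symmetric])
  also have "\<dots> = (\<integral>t. (\<Sum>m<j. binomial_term n m (\<Phi> t) (\<Phi> 1 - \<Phi> t)) \<partial>unit_interval)"
    by (intro Bochner_Integration.integral_cong) (simp_all add: G_x)
  finally show "(\<integral>x. (\<Prod>i<n. \<phi> (x i)) * order_stat n x j \<partial>unit_cube n) =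
      (\<integral>t. (\<Sum>m<j. binomial_term n m (\<Phi> t) (\<Phi> 1 - \<Phi> t)) \<partial>unit_interval)" .
qed

lemma integral_prod_mult_order_stat_second_difference:
  assumes "1 \<le> k" "k \<le> n"
  shows "(\<integral>x. (\<Prod>i<n. \<phi> (x i)) *
      (order_stat n x (k + 1) - 2 * order_stat n x k + order_stat n x (k - 1)) \<partial>unit_cube n) =
    (\<integral>t. binomial_term n k (\<Phi> t) (\<Phi> 1 - \<Phi> t) - binomial_term n (k - 1) (\<Phi> t) (\<Phi> 1 - \<Phi> t)
      \<partial>unit_interval)"
proof -
  define f where "f j x = (\<Prod>i<n. \<phi> (x i)) * order_stat n x j" for j x
  define P where "P j t = (\<Sum>m<j. binomial_term n m (\<Phi> t) (\<Phi> 1 - \<Phi> t))" for j t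
  have f: "integrable (unit_cube n) (f j)" and P: "integrable unit_interval (P j)"
    and fP: "integral\<^sup>L (unit_cube n) (f j) = integral\<^sup>L unit_interval (P j)" if "j \<le> n + 1" for j
    using integral_prod_mult_order_stat[OF that] unfolding f_def P_def by blast+
  have j: "k + 1 \<le> n + 1" "k \<le> n + 1" "k - 1 \<le> n + 1" using assms by simp_all
  have "(\<integral>x. (\<Prod>i<n. \<phi> (x i)) *
      (order_stat n x (k + 1) - 2 * order_stat n x k + order_stat n x (k - 1)) \<partial>unit_cube n)
      = (\<integral>x. f (k + 1) x - 2 * f k x + f (k - 1) x \<partial>unit_cube n)"
    unfolding f_def by (intro Bochner_Integration.integral_cong) (simp_all add: algebra_simps)
  also have "\<dots> = integral\<^sup>L (unit_cube n) (f (k + 1)) - 2 * integral\<^sup>L (unit_cube n) (f k)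
      + integral\<^sup>L (unit_cube n) (f (k - 1))"
    by (rule integral_second_difference[OF f[OF j(1)] f[OF j(2)] f[OF j(3)]])
  also have "\<dots> = integral\<^sup>L unit_interval (P (k + 1)) - 2 * integral\<^sup>L unit_interval (P k)
      + integral\<^sup>L unit_interval (P (k - 1))"
    by (simp only: fP[OF j(1)] fP[OF j(2)] fP[OF j(3)])
  also have "\<dots> = (\<integral>t. P (k + 1) t - 2 * P k t + P (k - 1) t \<partial>unit_interval)"
    by (rule integral_second_difference[OF P[OF j(1)] P[OF j(2)] P[OF j(3)], symmetric])
  also have "\<dots> = (\<integral>t. binomial_term n k (\<Phi> t) (\<Phi> 1 - \<Phi> t) - binomial_term n (k - 1) (\<Phi> t) (\<Phi> 1 - \<Phi> t)
      \<partial>unit_interval)"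
    unfolding P_def sum_lessThan_second_difference[OF assms(1)] ..
  finally show ?thesis .
qed

end

lemma primitive_on_unit_interval_if_square_integrable:
  assumes "set_borel_measurable lborel {0..1} \<phi>" "set_integrable lborel {0..1} (\<lambda>t. (\<phi> t)\<^sup>2)"
    and "\<And>x. \<Phi> x = (LINT t:{0..x}|lborel. \<phi> t)"
  shows "primitive_on_unit_interval \<phi> \<Phi>"
proof
  have "\<phi> \<in> borel_measurable unit_interval" "integrable unit_interval (\<lambda>t. (\<phi> t)\<^sup>2)"
    using assms(1,2) by (simp_all add: borel_measurable_unit_interval_iff integrable_unit_interval_iff)
  then show "integrable unit_interval \<phi>"
    by (rule unit_interval.square_integrable_imp_integrable)
qed (fact assms(3))

theorem proposition18:
  fixes n k :: nat and \<phi> \<Phi> :: "real \<Rightarrow> real"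
  assumes n: "n \<ge> 1"
    and meas: "set_borel_measurable lborel {0..1} \<phi>"
    and L2: "set_integrable lborel {0..1} (\<lambda>t. (\<phi> t)\<^sup>2)"
    and \<Phi>_def: "\<And>x. \<Phi> x = (LINT t:{0..x}|lborel. \<phi> t)"
    and k: "k \<in> {1..n}"
  shows "influence_index n (\<lambda>x. \<Prod>i<n. \<phi> (x i)) k =
    (if \<Phi> 1 \<noteq> 0 then
       \<Phi> 1 ^ n * (LINT y:{0..1}|lborel.
          deriv (beta_density (k + 1) (n - k + 2)) (\<Phi> y / \<Phi> 1))
     else
       (-1) ^ (n - k + 1) * (real n + 1) *
         (Gamma (real n + 3) / (Gamma (real k + 1) * Gamma (real n - real k + 2))) *
         (LINT y:{0..1}|lborel. (\<Phi> y) ^ n))"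
proof -
  interpret primitive_on_unit_interval \<phi> \<Phi>
    using meas L2 \<Phi>_def by (rule primitive_on_unit_interval_if_square_integrable)
  have k: "1 \<le> k" "k \<le> n" using k by auto
  let ?d = "\<lambda>t. - (real n + 1) * (real n + 2) *
    (binomial_term n k (\<Phi> t) (\<Phi> 1 - \<Phi> t) - binomial_term n (k - 1) (\<Phi> t) (\<Phi> 1 - \<Phi> t))"
  have I: "influence_index n (\<lambda>x. \<Prod>i<n. \<phi> (x i)) k = (\<integral>t. ?d t \<partial>unit_interval)"
    unfolding influence_index_def integral_prod_mult_order_stat_second_difference[OF k] by simp
  show ?thesis
  proof (cases "\<Phi> 1 = 0")
    case True
    have "?d t = (- 1) ^ (n - k + 1) * (real n + 1) *
        (Gamma (real n + 3) / (Gamma (real k + 1) * Gamma (real n - real k + 2))) * \<Phi> t ^ n" for t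
      using scaled_binomial_term_diff_opposite[OF k, of "\<Phi> t"] by (simp only: True diff_0)
    then show ?thesis using True by (simp add: I integral_unit_interval)
  next
    case False
    have "?d t = \<Phi> 1 ^ n * deriv (beta_density (k + 1) (n - k + 2)) (\<Phi> t / \<Phi> 1)" for t
      using scaled_deriv_beta_density[OF k False, of "\<Phi> t"] by simp
    then show ?thesis using False by (simp add: I integral_unit_interval)
  qed
qed

end
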